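(* Any connected stratified surface $\Omega$ with $\mu(\Omega)\le 0$ (a trivial surface) is isomorphic to one of: the sphere without special points; the projective plane without special points; the disc without special points; the sphere with one interior special point; the disc with one boundary special point and no interior special points; the sphere with two interior special points; the projective plane with one interior special point; the torus without special points; the Klein bottle without special points; the disc with one interior special point and no boundary special points; the disc with two boundary special points and no interior special points; the Möbius band without special points; the cylinder without special points.
   Context: A stratified surface is a compact topological 2-manifold (possibly with boundary, possibly nonorientable) with a finite set of special points, some in the interior and some on the boundary; isomorphisms are homeomorphisms preserving the sets of interior and of boundary special points. A connected orientable surface which is a sphere with $g$ handles and $s$ holes has genus $g$; a connected nonorientable surface which is a projective plane (resp. Klein bottle) with $a$ handles and $s$ holes has genus $g=a+\tfrac12$ (resp. $g=a+1$). For a stratified surface with connected components $\Omega^1,\dots,\Omega^c$, where $\Omega^i$ has genus $g^i$, $s^i$ boundary contours carrying $m^i_1,\dots,m^i_{s^i}$ special points, and $m^i$ interior special points, $\mu(\Omega)=\sum_i2g^i+\sum_im^i+\sum_is^i+\frac12\sum_i\sum_jm^i_j-2c$. *)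

theory Defs
  imports "HOL-Analysis.Analysis"
begin

definition quotient_topology :: "'a topology \<Rightarrow> ('a \<Rightarrow> 'b) \<Rightarrow> 'b topology" where
  "quotient_topology X f =
     topology (\<lambda>U. U \<subseteq> f ` topspace X \<and> openin X {x \<in> topspace X. f x \<in> U})"

definition half_plane :: "complex set" where
  "half_plane = {z. 0 \<le> Im z}"

definition surface_with_boundary :: "'a topology \<Rightarrow> bool" where
  "surface_with_boundary X \<longleftrightarrow> compact_space X \<and> Hausdorff_space X \<and>
     (\<forall>x\<in>topspace X. \<exists>U V. openin X U \<and> x \<in> U \<and> openin (top_of_set half_plane) V \<and>
        subtopology X U homeomorphic_space top_of_set V)"

definition surf_interior :: "'a topology \<Rightarrow> 'a set" where
  "surf_interior X = {x \<in> topspace X. \<exists>U V. openin X U \<and> x \<in> U \<and> open (V::complex set) \<and>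
        subtopology X U homeomorphic_space top_of_set V}"

definition surf_boundary :: "'a topology \<Rightarrow> 'a set" where
  "surf_boundary X = topspace X - surf_interior X"

definition stratified_surface :: "'a topology \<Rightarrow> 'a set \<Rightarrow> 'a set \<Rightarrow> bool" where
  "stratified_surface X A B \<longleftrightarrow> surface_with_boundary X \<and> finite A \<and> finite B \<and>
     A \<subseteq> surf_interior X \<and> B \<subseteq> surf_boundary X"

definition strat_iso :: "'a topology \<Rightarrow> 'a set \<Rightarrow> 'a set \<Rightarrow> 'b topology \<Rightarrow> 'b set \<Rightarrow> 'b set \<Rightarrow> bool" where
  "strat_iso X A B Y A' B' \<longleftrightarrow> (\<exists>f. homeomorphic_map X Y f \<and> f ` A = A' \<and> f ` B = B')"

text \<open>Edge words: a letter is a pair (namespace, index), paired with an orientation sign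
  (True = a, False = a^-1).  Namespaces: 0 handle letters, 1 cross-cap letters,
  2 hole-connecting letters, 3 free (boundary) hole edges.\<close>
type_synonym edge_word = "((nat \<times> nat) \<times> bool) list"

definition handles_word :: "nat \<Rightarrow> edge_word" where
  "handles_word g = concat (map (\<lambda>i. [((0, 2*i), True), ((0, 2*i+1), True),
                                      ((0, 2*i), False), ((0, 2*i+1), False)]) [0..<g])"

definition holes_word :: "nat \<Rightarrow> edge_word" where
  "holes_word s = concat (map (\<lambda>i. [((2, i), True), ((3, i), True), ((2, i), False)]) [0..<s])"

text \<open>Connected surfaces: sphere / projective plane / Klein bottle with a handles.\<close>
datatype surf_kind = Sphere_H nat | Proj_H nat | Klein_H nat

fun kind_word :: "surf_kind \<Rightarrow> edge_word" where
  "kind_word (Sphere_H a) = handles_word a"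
| "kind_word (Proj_H a) = [((1,0), True), ((1,0), True)] @ handles_word a"
| "kind_word (Klein_H a) = [((1,0), True), ((1,0), True), ((1,1), True), ((1,1), True)] @ handles_word a"

fun kind_genus :: "surf_kind \<Rightarrow> real" where
  "kind_genus (Sphere_H a) = real a"
| "kind_genus (Proj_H a) = real a + 1/2"
| "kind_genus (Klein_H a) = real a + 1"

text \<open>Word of the surface of kind k with s holes (the empty word is replaced by a a^-1: sphere).\<close>
definition model_word :: "surf_kind \<Rightarrow> nat \<Rightarrow> edge_word" where
  "model_word k s = (let w = kind_word k @ holes_word s in
                     if w = [] then [((0,0), True), ((0,0), False)] else w)"

text \<open>The closed unit disc viewed as an n-gon: point at parameter t of edge j.\<close>
definition edge_pt :: "nat \<Rightarrow> nat \<Rightarrow> real \<Rightarrow> complex" where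
  "edge_pt n j t = cis (2 * pi * (real j + t) / real n)"

definition edge_glue :: "edge_word \<Rightarrow> complex \<Rightarrow> complex \<Rightarrow> bool" where
  "edge_glue w z z' \<longleftrightarrow> (\<exists>j j' t. j < length w \<and> j' < length w \<and> j \<noteq> j' \<and>
      fst (w ! j) = fst (w ! j') \<and> 0 \<le> t \<and> t \<le> 1 \<and>
      z = edge_pt (length w) j t \<and>
      z' = edge_pt (length w) j' (if snd (w ! j) = snd (w ! j') then t else 1 - t))"

definition glue_equiv :: "edge_word \<Rightarrow> complex \<Rightarrow> complex \<Rightarrow> bool" where
  "glue_equiv w = (\<lambda>z z'. edge_glue w z z' \<or> edge_glue w z' z)\<^sup>*\<^sup>*"

definition polygon_surface :: "edge_word \<Rightarrow> complex set topology" where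
  "polygon_surface w = quotient_topology (top_of_set (cball 0 1))
       (\<lambda>z. {z' \<in> cball 0 1. glue_equiv w z z'})"

definition surface_model :: "surf_kind \<Rightarrow> nat \<Rightarrow> complex set topology" where
  "surface_model k s = polygon_surface (model_word k s)"

text \<open>\<open>mu\<close> of a connected stratified surface of kind k (genus kind_genus k) with s boundary
  contours, m interior special points and b boundary special points in total.\<close>
definition mu_conn :: "surf_kind \<Rightarrow> nat \<Rightarrow> nat \<Rightarrow> nat \<Rightarrow> real" where
  "mu_conn k s m b = 2 * kind_genus k + real m + real s + real b / 2 - 2"

definition iso_to_model :: "'a topology \<Rightarrow> 'a set \<Rightarrow> 'a set \<Rightarrow> surf_kind \<Rightarrow> nat \<Rightarrow> nat \<Rightarrow> nat \<Rightarrow> bool" where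
  "iso_to_model X A B k s p q \<longleftrightarrow> (\<exists>A' B'. stratified_surface (surface_model k s) A' B' \<and>
      card A' = p \<and> card B' = q \<and> strat_iso X A B (surface_model k s) A' B')"

end

theory Submission
  imports Defs
begin

text \<open>Since \<open>\<mu> \<le> 0\<close> bounds the genus, the number of holes and the numbers of special points, only
  finitely many data \<open>(k, s, card A, card B)\<close> are possible, and a stratified surface is
  isomorphic to its own model \<open>surface_model k s\<close> carrying \<open>card A\<close> and \<open>card B\<close> special points.
  The arithmetic alone also admits boundary special points on the sphere and on the projective
  plane; these are excluded by showing that both models, discs whose boundary circle is glued by
  \<open>z \<mapsto> cnj z\<close> resp.\ \<open>z \<mapsto> -z\<close>, have empty boundary. Every point of the glued disc gets a chart
  onto the whole plane: the open disc itself, a Cayley transform followed by squaring for the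
  reflection, and the gnomonic projection of the hemisphere for the antipodal map.\<close>

lemma istopology_quotient:
  "istopology (\<lambda>U. U \<subseteq> f ` topspace X \<and> openin X {x \<in> topspace X. f x \<in> U})"
  unfolding istopology_def
proof (rule conjI; intro allI impI)
  fix S T
  assume "S \<subseteq> f ` topspace X \<and> openin X {x \<in> topspace X. f x \<in> S}"
    and "T \<subseteq> f ` topspace X \<and> openin X {x \<in> topspace X. f x \<in> T}"
  moreover have "{x \<in> topspace X. f x \<in> S \<inter> T} =
      {x \<in> topspace X. f x \<in> S} \<inter> {x \<in> topspace X. f x \<in> T}" by auto
  ultimately show "S \<inter> T \<subseteq> f ` topspace X \<and> openin X {x \<in> topspace X. f x \<in> S \<inter> T}"
    by auto
next
  fix K assume K: "\<forall>S\<in>K. S \<subseteq> f ` topspace X \<and> openin X {x \<in> topspace X. f x \<in> S}"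
  have "{x \<in> topspace X. f x \<in> \<Union>K} = (\<Union>S\<in>K. {x \<in> topspace X. f x \<in> S})" by auto
  then show "\<Union>K \<subseteq> f ` topspace X \<and> openin X {x \<in> topspace X. f x \<in> \<Union>K}"
    using K by auto
qed

lemma openin_quotient_topology:
  "openin (quotient_topology X f) U \<longleftrightarrow> U \<subseteq> f ` topspace X \<and> openin X {x \<in> topspace X. f x \<in> U}"
  unfolding quotient_topology_def topology_inverse'[OF istopology_quotient] by simp

lemma topspace_quotient_topology: "topspace (quotient_topology X f) = f ` topspace X"
proof -
  have "{x \<in> topspace X. f x \<in> f ` topspace X} = topspace X" by auto
  then have "openin (quotient_topology X f) (f ` topspace X)"
    unfolding openin_quotient_topology by simp
  then have "f ` topspace X \<subseteq> topspace (quotient_topology X f)"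
    by (rule openin_subset)
  moreover have "topspace (quotient_topology X f) \<subseteq> f ` topspace X"
    using openin_quotient_topology[of X f "topspace (quotient_topology X f)"] by simp
  ultimately show ?thesis by blast
qed

lemma continuous_map_quotient_topology: "continuous_map X (quotient_topology X f) f"
  by (auto simp: continuous_map_def topspace_quotient_topology openin_quotient_topology)

lemma surf_interior_subset_topspace: "surf_interior X \<subseteq> topspace X"
  by (auto simp: surf_interior_def)

lemma surf_boundary_subset_topspace: "surf_boundary X \<subseteq> topspace X"
  by (auto simp: surf_boundary_def)

lemma homeomorphic_map_chart:
  assumes f: "homeomorphic_map X Y f" and x: "x \<in> topspace X"
    and chart: "\<exists>U V. openin X U \<and> x \<in> U \<and> P V \<and> subtopology X U homeomorphic_space top_of_set V"
  shows "\<exists>U V. openin Y U \<and> f x \<in> U \<and> P V \<and> subtopology Y U homeomorphic_space top_of_set V"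
proof -
  obtain U V where U: "openin X U" "x \<in> U" "P V" "subtopology X U homeomorphic_space top_of_set V"
    using chart by blast
  have UX: "U \<subseteq> topspace X" using U(1) openin_subset by blast
  have "openin Y (f ` U)" using homeomorphic_map_openness[OF f UX] U(1) by simp
  moreover have "homeomorphic_map (subtopology X U) (subtopology Y (f ` U)) f"
    using homeomorphic_map_subtopologies[OF f] UX f
    by (metis homeomorphic_imp_surjective_map image_mono inf.absorb_iff2 inf_commute)
  then have "subtopology Y (f ` U) homeomorphic_space top_of_set V"
    using U(4) homeomorphic_map_imp_homeomorphic_space homeomorphic_space_sym homeomorphic_space_trans
    by blast
  ultimately show ?thesis using U by blast
qed

lemma homeomorphic_map_surf_interior_subset:
  assumes f: "homeomorphic_map X Y f"
  shows "f ` surf_interior X \<subseteq> surf_interior Y"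
proof
  fix y assume "y \<in> f ` surf_interior X"
  then obtain x where x: "x \<in> surf_interior X" and y: "y = f x" by blast
  then have xX: "x \<in> topspace X" by (simp add: surf_interior_def)
  then have "y \<in> topspace Y"
    using y homeomorphic_imp_surjective_map[OF f] by blast
  moreover have "\<exists>U V. openin Y U \<and> y \<in> U \<and> open V \<and>
      subtopology Y U homeomorphic_space top_of_set (V :: complex set)"
    using homeomorphic_map_chart[OF f xX, of "open :: complex set \<Rightarrow> bool"] x y
    by (simp add: surf_interior_def)
  ultimately show "y \<in> surf_interior Y" by (simp add: surf_interior_def)
qed

lemma homeomorphic_map_surf_interior:
  assumes f: "homeomorphic_map X Y f"
  shows "f ` surf_interior X = surf_interior Y"
proof
  show "f ` surf_interior X \<subseteq> surf_interior Y"
    using homeomorphic_map_surf_interior_subset[OF f] .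
  obtain g where fg: "homeomorphic_maps X Y f g"
    using f homeomorphic_map_maps by blast
  then have "g ` surf_interior Y \<subseteq> surf_interior X"
    by (intro homeomorphic_map_surf_interior_subset) (simp add: homeomorphic_maps_map)
  moreover have "y = f (g y)" if "y \<in> surf_interior Y" for y
    using fg that by (simp add: homeomorphic_maps_def surf_interior_def)
  ultimately show "surf_interior Y \<subseteq> f ` surf_interior X" by blast
qed

lemma homeomorphic_map_surf_boundary:
  assumes f: "homeomorphic_map X Y f"
  shows "f ` surf_boundary X = surf_boundary Y"
proof -
  have "inj_on f (topspace X)" using f homeomorphic_imp_injective_map by blast
  then have "f ` surf_boundary X = f ` topspace X - f ` surf_interior X"
    unfolding surf_boundary_def by (simp add: inj_on_image_set_diff surf_interior_subset_topspace)
  then show ?thesis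
    using f by (simp add: surf_boundary_def homeomorphic_map_surf_interior homeomorphic_imp_surjective_map)
qed

lemma homeomorphic_map_surface_with_boundary:
  assumes f: "homeomorphic_map X Y f" and X: "surface_with_boundary X"
  shows "surface_with_boundary Y"
proof -
  have XY: "X homeomorphic_space Y" using f homeomorphic_map_imp_homeomorphic_space by blast
  have "compact_space Y" "Hausdorff_space Y"
    using X unfolding surface_with_boundary_def
      homeomorphic_compact_space[OF XY] homeomorphic_Hausdorff_space[OF XY] by simp_all
  moreover have "\<forall>y\<in>topspace Y. \<exists>U V. openin Y U \<and> y \<in> U \<and>
      openin (top_of_set half_plane) V \<and> subtopology Y U homeomorphic_space top_of_set V"
  proof
    fix y assume "y \<in> topspace Y"
    then have "y \<in> f ` topspace X"
      using homeomorphic_imp_surjective_map[OF f] by simp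
    then obtain x where x: "x \<in> topspace X" and y: "y = f x" by blast
    have "\<exists>U V. openin X U \<and> x \<in> U \<and> openin (top_of_set half_plane) V \<and>
        subtopology X U homeomorphic_space top_of_set V"
      using X x by (simp add: surface_with_boundary_def)
    from homeomorphic_map_chart[OF f x this]
    show "\<exists>U V. openin Y U \<and> y \<in> U \<and> openin (top_of_set half_plane) V \<and>
        subtopology Y U homeomorphic_space top_of_set V" unfolding y .
  qed
  ultimately show ?thesis unfolding surface_with_boundary_def by (simp only:)
qed

lemma homeomorphic_map_stratified_surface:
  assumes f: "homeomorphic_map X Y f" and S: "stratified_surface X A B"
  shows "stratified_surface Y (f ` A) (f ` B)"
proof -
  have "f ` A \<subseteq> f ` surf_interior X" "f ` B \<subseteq> f ` surf_boundary X"
    using S unfolding stratified_surface_def by (blast intro: image_mono)+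
  then have "f ` A \<subseteq> surf_interior Y" "f ` B \<subseteq> surf_boundary Y"
    unfolding homeomorphic_map_surf_interior[OF f] homeomorphic_map_surf_boundary[OF f] .
  then show ?thesis
    using S homeomorphic_map_surface_with_boundary[OF f] by (simp add: stratified_surface_def)
qed

lemma iso_to_model_homeomorphic:
  assumes S: "stratified_surface X A B" and XM: "X homeomorphic_space surface_model k s"
  shows "iso_to_model X A B k s (card A) (card B)"
proof -
  obtain f where f: "homeomorphic_map X (surface_model k s) f"
    using XM homeomorphic_space by blast
  have inj: "inj_on f (topspace X)" using f by (rule homeomorphic_imp_injective_map)
  have "A \<subseteq> topspace X" "B \<subseteq> topspace X"
    using S surf_interior_subset_topspace[of X] surf_boundary_subset_topspace[of X]
    by (auto simp: stratified_surface_def)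
  then have "card (f ` A) = card A" "card (f ` B) = card B"
    by (simp_all add: card_image inj_on_subset[OF inj])
  moreover have "strat_iso X A B (surface_model k s) (f ` A) (f ` B)"
    unfolding strat_iso_def using f by blast
  ultimately show ?thesis
    unfolding iso_to_model_def using homeomorphic_map_stratified_surface[OF f S]
    by (intro exI[of _ "f ` A"] exI[of _ "f ` B"] conjI)
qed

lemma open_plane_subset_surf_interior:
  assumes "openin X V" and "subtopology X V homeomorphic_space top_of_set (UNIV :: complex set)"
  shows "V \<subseteq> surf_interior X"
proof
  fix p assume p: "p \<in> V"
  then have "p \<in> topspace X" using openin_subset[OF assms(1)] by blast
  moreover have "\<exists>W U. openin X W \<and> p \<in> W \<and> open (U :: complex set) \<and>
      subtopology X W homeomorphic_space top_of_set U"
    using assms p by (intro exI[of _ V] exI[of _ UNIV]) simp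
  ultimately show "p \<in> surf_interior X" by (simp add: surf_interior_def)
qed

text \<open>\<open>F\<close> is constant on the fibres of \<open>q\<close> in the saturated open set \<open>U\<close>, and \<open>s\<close> is a
  section of \<open>F\<close> that need not be continuous itself, only after composing with \<open>q\<close>.
  Then \<open>q \<circ> s\<close> is a homeomorphism of the plane onto the open set \<open>q ` U\<close>.\<close>
locale quotient_plane_chart =
  fixes D U :: "complex set" and q :: "complex \<Rightarrow> 'b" and s F :: "complex \<Rightarrow> complex"
  assumes openin_U: "openin (top_of_set D) U"
    and continuous_section: "continuous_map euclidean (quotient_topology (top_of_set D) q) (q \<circ> s)"
    and range_section: "range s \<subseteq> U"
    and continuous_chart: "continuous_on U F"
    and chart_section: "\<And>u. F (s u) = u"
    and section_chart: "\<And>z. z \<in> U \<Longrightarrow> q (s (F z)) = q z"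
    and chart_respects: "\<And>z z'. z \<in> D \<Longrightarrow> z' \<in> U \<Longrightarrow> q z = q z' \<Longrightarrow> z \<in> U \<and> F z = F z'"
begin

abbreviation "M \<equiv> quotient_topology (top_of_set D) q"

lemma U_subset_D: "U \<subseteq> D"
  using openin_subset[OF openin_U] by simp

lemma saturation_image_section: "{z \<in> D. q z \<in> q ` s ` W} = U \<inter> F -` W"
proof
  show "{z \<in> D. q z \<in> q ` s ` W} \<subseteq> U \<inter> F -` W"
  proof
    fix z assume "z \<in> {z \<in> D. q z \<in> q ` s ` W}"
    then obtain u where "z \<in> D" "u \<in> W" "q z = q (s u)" by auto
    moreover have "s u \<in> U" using range_section by auto
    ultimately have "z \<in> U" "F z = u" using chart_respects[of z "s u"] chart_section[of u] by auto
    with \<open>u \<in> W\<close> show "z \<in> U \<inter> F -` W" by simp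
  qed
  show "U \<inter> F -` W \<subseteq> {z \<in> D. q z \<in> q ` s ` W}"
  proof
    fix z assume z: "z \<in> U \<inter> F -` W"
    then have "q z = q (s (F z))" using section_chart by simp
    then show "z \<in> {z \<in> D. q z \<in> q ` s ` W}" using z U_subset_D by blast
  qed
qed

lemma openin_image_section:
  assumes "open W"
  shows "openin M (q ` s ` W)"
proof -
  have "q ` s ` W \<subseteq> q ` D" using range_section U_subset_D by auto
  moreover have "openin (top_of_set U) (U \<inter> F -` W)"
    using continuous_openin_preimage_gen[OF continuous_chart assms] .
  then have "openin (top_of_set D) (U \<inter> F -` W)" using openin_U by (rule openin_trans)
  ultimately show ?thesis
    unfolding openin_quotient_topology topspace_euclidean_subtopology saturation_image_section
    by (simp only:)
qed

lemma image_range_section: "q ` range s = q ` U"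
proof
  show "q ` range s \<subseteq> q ` U" using range_section by (rule image_mono)
  show "q ` U \<subseteq> q ` range s"
  proof
    fix y assume "y \<in> q ` U"
    then obtain z where "z \<in> U" "y = q z" by blast
    then have "y = q (s (F z))" using section_chart by simp
    then show "y \<in> q ` range s" by blast
  qed
qed

lemma openin_image: "openin M (q ` U)"
  using openin_image_section[of UNIV] image_range_section by simp

lemma homeomorphic_map_section: "homeomorphic_map euclidean (subtopology M (q ` U)) (q \<circ> s)"
proof (rule bijective_open_imp_homeomorphic_map)
  show "continuous_map euclidean (subtopology M (q ` U)) (q \<circ> s)"
    using continuous_section image_range_section by (auto simp: continuous_map_in_subtopology)
  have "open_map euclidean M (q \<circ> s)"
    unfolding open_map_def open_openin[symmetric] by (metis image_comp openin_image_section)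
  then show "open_map euclidean (subtopology M (q ` U)) (q \<circ> s)"
    using range_section by (intro open_map_into_subtopology) auto
  show "(q \<circ> s) ` topspace euclidean = topspace (subtopology M (q ` U))"
    using image_range_section openin_subset[OF openin_image] by (auto simp: image_comp)
  show "inj_on (q \<circ> s) (topspace euclidean)"
  proof (rule inj_onI)
    fix u u' assume "(q \<circ> s) u = (q \<circ> s) u'"
    moreover have "s u \<in> D" "s u' \<in> U" using range_section U_subset_D by auto
    ultimately have "F (s u) = F (s u')" using chart_respects by simp
    then show "u = u'" by (simp add: chart_section)
  qed
qed

lemma image_subset_surf_interior: "q ` U \<subseteq> surf_interior M"
proof (rule open_plane_subset_surf_interior[OF openin_image])
  show "subtopology M (q ` U) homeomorphic_space top_of_set (UNIV :: complex set)"
    using homeomorphic_map_section homeomorphic_map_imp_homeomorphic_space homeomorphic_space_sym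
    by fastforce
qed

end

lemma continuous_map_quotient_compose:
  assumes "continuous_on UNIV f" "range f \<subseteq> D"
  shows "continuous_map euclidean (quotient_topology (top_of_set D) q) (q \<circ> f)"
proof -
  have "continuous_map euclidean (top_of_set D) f"
    using assms by (auto simp: continuous_map_in_subtopology)
  then show ?thesis using continuous_map_quotient_topology by (rule continuous_map_compose)
qed

lemma continuous_map_quotient_cases_Im:
  assumes f: "continuous_on UNIV f" "range f \<subseteq> D"
    and g: "continuous_on UNIV g" "range g \<subseteq> D"
    and fg: "\<And>u. Im u = 0 \<Longrightarrow> q (f u) = q (g u)"
  shows "continuous_map euclidean (quotient_topology (top_of_set D) q)
           (\<lambda>u. q (if Im u \<le> 0 then f u else g u))"
proof -
  let ?M = "quotient_topology (top_of_set D) q"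
  have "continuous_map euclidean ?M (\<lambda>u. if Im u \<le> 0 then (q \<circ> f) u else (q \<circ> g) u)"
  proof (rule continuous_map_cases_le)
    show "continuous_map euclidean euclideanreal Im"
      by (simp add: continuous_on_Im continuous_on_id)
    show "continuous_map euclidean euclideanreal (\<lambda>u. 0)" by simp
    show "continuous_map (subtopology euclidean {u. u \<in> topspace euclidean \<and> Im u \<le> 0}) ?M (q \<circ> f)"
      using continuous_map_quotient_compose[OF f] by (rule continuous_map_from_subtopology)
    show "continuous_map (subtopology euclidean {u. u \<in> topspace euclidean \<and> 0 \<le> Im u}) ?M (q \<circ> g)"
      using continuous_map_quotient_compose[OF g] by (rule continuous_map_from_subtopology)
    show "(q \<circ> f) u = (q \<circ> g) u" if "Im u = 0" for u
      using fg[OF that] by simp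
  qed
  then show ?thesis unfolding comp_def by (simp only: if_distrib)
qed

definition polygon_class :: "edge_word \<Rightarrow> complex \<Rightarrow> complex set" where
  "polygon_class w z = {z' \<in> cball 0 1. glue_equiv w z z'}"

lemma polygon_surface_quotient:
  "polygon_surface w = quotient_topology (top_of_set (cball 0 1)) (polygon_class w)"
  unfolding polygon_surface_def polygon_class_def by (rule refl)

lemma glue_equiv_sym: "glue_equiv w z z' \<Longrightarrow> glue_equiv w z' z"
  using symp_rtranclp_symclp[of "edge_glue w"]
  unfolding glue_equiv_def symclp_def symp_def by blast

lemma polygon_class_eq_iff:
  assumes "z' \<in> cball 0 1"
  shows "polygon_class w z = polygon_class w z' \<longleftrightarrow> glue_equiv w z z'"
proof
  assume "polygon_class w z = polygon_class w z'"
  moreover have "z' \<in> polygon_class w z'"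
    using assms by (simp add: polygon_class_def glue_equiv_def)
  ultimately have "z' \<in> polygon_class w z" by simp
  then show "glue_equiv w z z'" by (simp add: polygon_class_def)
next
  assume "glue_equiv w z z'"
  then show "polygon_class w z = polygon_class w z'"
    using glue_equiv_sym unfolding polygon_class_def glue_equiv_def
    by (metis (no_types, lifting) rtranclp_trans)
qed

lemma edge_glue_norm:
  assumes "edge_glue w z z'"
  shows "cmod z = 1 \<and> cmod z' = 1"
  using assms by (auto simp: edge_glue_def edge_pt_def)

lemma glue_equiv_cases:
  assumes "glue_equiv w z z'"
  shows "z' = z \<or> (cmod z = 1 \<and> cmod z' = 1)"
  using assms unfolding glue_equiv_def
  by (induction rule: rtranclp_induct) (auto dest: edge_glue_norm)

lemma polygon_class_ball_surf_interior:
  "polygon_class w ` ball 0 1 \<subseteq> surf_interior (polygon_surface w)"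
proof -
  obtain F s where hom: "homeomorphism (ball (0 :: complex) 1) (UNIV :: complex set) F s"
    using homeomorphic_ball01_UNIV unfolding homeomorphic_def by blast
  then have s_ball: "range s = ball 0 1" and s_cont: "continuous_on UNIV s"
    and F_s: "\<And>u. F (s u) = u" and s_F: "\<And>z. z \<in> ball 0 1 \<Longrightarrow> s (F z) = z"
    by (simp_all add: homeomorphism_def)
  have "quotient_plane_chart (cball 0 1) (ball 0 1) (polygon_class w) s F"
  proof
    show "openin (top_of_set (cball 0 1)) (ball (0::complex) 1)"
      by (simp add: open_subset ball_subset_cball)
    show "continuous_map euclidean (quotient_topology (top_of_set (cball 0 1)) (polygon_class w))
        (polygon_class w \<circ> s)"
      using s_ball by (intro continuous_map_quotient_compose s_cont) auto
    show "continuous_on (ball 0 1) F" using hom by (simp add: homeomorphism_def)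
    show "polygon_class w (s (F z)) = polygon_class w z" if "z \<in> ball 0 1" for z
      using s_F[OF that] by simp
    show "z \<in> ball 0 1 \<and> F z = F z'"
      if "z \<in> cball 0 1" "z' \<in> ball 0 1" "polygon_class w z = polygon_class w z'" for z z'
    proof -
      have "glue_equiv w z z'" using that polygon_class_eq_iff by auto
      then have "z' = z" using glue_equiv_cases that(2) by fastforce
      then show ?thesis using that(2) by simp
    qed
  qed (use s_ball F_s in auto)
  then show ?thesis
    unfolding polygon_surface_quotient by (rule quotient_plane_chart.image_subset_surf_interior)
qed

lemma cis_pi_plus: "cis (pi + x) = - cis x"
  by (simp add: complex_eq_iff)

lemma cis_2pi_minus: "cis (2 * pi - x) = cnj (cis x)"
  by (simp add: complex_eq_iff)

lemma unit_circle_two_arcs: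
  assumes "cmod z = 1"
  obtains j :: nat and t where "j < 2" "0 \<le> t" "t \<le> 1" "z = cis (pi * (real j + t))"
proof -
  define \<theta> where "\<theta> = Arg2pi z"
  have z: "z = cis \<theta>"
    using Arg2pi[of z] assms by (simp add: \<theta>_def is_Arg_def cis_conv_exp)
  have \<theta>: "0 \<le> \<theta>" "\<theta> < 2 * pi"
    using Arg2pi[of z] by (auto simp: \<theta>_def)
  show ?thesis
  proof (cases "\<theta> \<le> pi")
    case True
    then show ?thesis
      using that[of 0 "\<theta> / pi"] \<theta> z by simp
  next
    case False
    have "pi * (1 + (\<theta> / pi - 1)) = \<theta>" by (simp add: field_simps)
    then show ?thesis
      using that[of 1 "\<theta> / pi - 1"] False \<theta> z by (simp add: field_simps)
  qed
qed

lemma cis_other_half: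
  assumes "j < 2"
  shows "cis (pi * (real (1 - j) + t)) = - cis (pi * (real j + t))"
    and "cis (pi * (real (1 - j) + (1 - t))) = cnj (cis (pi * (real j + t)))"
proof -
  have j: "j = 0 \<or> j = 1" using assms by auto
  then show "cis (pi * (real (1 - j) + t)) = - cis (pi * (real j + t))"
    using cis_pi_plus[of "pi * t"] by (auto simp: algebra_simps)
  have "pi * (real (1 - j) + (1 - t)) = 2 * pi - pi * (real j + t)"
    using j by (auto simp: algebra_simps)
  then show "cis (pi * (real (1 - j) + (1 - t))) = cnj (cis (pi * (real j + t)))"
    by (simp add: cis_2pi_minus)
qed

lemma edge_glue_two_letters:
  "edge_glue [(a, b), (a, b')] z z' \<longleftrightarrow> cmod z = 1 \<and> z' = (if b = b' then - z else cnj z)"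
  (is "edge_glue ?w z z' \<longleftrightarrow> _")
proof -
  have len: "length ?w = 2" by simp
  have pt: "edge_pt 2 j t = cis (pi * (real j + t))" for j t
    by (simp add: edge_pt_def)
  have letter: "?w ! j = (a, if j = 0 then b else b')" if "j < 2" for j
    using that by (cases j) auto
  show ?thesis
  proof
    assume "edge_glue ?w z z'"
    then obtain j j' t where j: "j < 2" "j' < 2" "j \<noteq> j'" and t: "0 \<le> t" "t \<le> 1"
      and z: "z = cis (pi * (real j + t))"
      and z': "z' = cis (pi * (real j' + (if snd (?w ! j) = snd (?w ! j') then t else 1 - t)))"
      unfolding edge_glue_def len pt by blast
    have j': "j' = 1 - j" using j by auto
    have "snd (?w ! j) = snd (?w ! j') \<longleftrightarrow> b = b'"
      using j letter by auto
    then show "cmod z = 1 \<and> z' = (if b = b' then - z else cnj z)"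
      using z z' cis_other_half[OF j(1)] by (simp add: j')
  next
    assume "cmod z = 1 \<and> z' = (if b = b' then - z else cnj z)"
    then have z: "cmod z = 1" and z': "z' = (if b = b' then - z else cnj z)" by auto
    obtain j t where j: "j < 2" and t: "0 \<le> t" "t \<le> 1" and zj: "z = cis (pi * (real j + t))"
      using unit_circle_two_arcs[OF z] .
    have "snd (?w ! j) = snd (?w ! (1 - j)) \<longleftrightarrow> b = b'"
      using j letter by auto
    then have "cis (pi * (real (1 - j) + (if snd (?w ! j) = snd (?w ! (1 - j)) then t else 1 - t)))
        = (if b = b' then cis (pi * (real (1 - j) + t)) else cis (pi * (real (1 - j) + (1 - t))))"
      by simp
    also have "\<dots> = z'"
      using cis_other_half[OF j, of t] z' zj by simp
    finally have "z' = cis (pi * (real (1 - j) + (if snd (?w ! j) = snd (?w ! (1 - j)) then t else 1 - t)))" ..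
    moreover have "j \<noteq> 1 - j" by presburger
    moreover have "fst (?w ! j) = fst (?w ! (1 - j))" using j letter by simp
    ultimately show "edge_glue ?w z z'"
      unfolding edge_glue_def len pt using j t zj
      by (intro exI[of _ j] exI[of _ "1 - j"] exI[of _ t]) simp
  qed
qed

lemma glue_equiv_two_letters:
  "glue_equiv [(a, b), (a, b')] z z' \<longleftrightarrow>
     z' = z \<or> (cmod z = 1 \<and> z' = (if b = b' then - z else cnj z))"
  (is "glue_equiv ?w z z' \<longleftrightarrow> _")
proof -
  define \<tau> where "\<tau> x = (if b = b' then - x else cnj x)" for x
  have \<tau>: "\<tau> (\<tau> x) = x" "cmod (\<tau> x) = cmod x" for x
    by (simp_all add: \<tau>_def)
  have glue: "edge_glue ?w x y \<longleftrightarrow> cmod x = 1 \<and> y = \<tau> x" for x y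
    by (simp add: edge_glue_two_letters \<tau>_def)
  have "glue_equiv ?w z z' \<longleftrightarrow> z' = z \<or> (cmod z = 1 \<and> z' = \<tau> z)"
  proof
    assume "glue_equiv ?w z z'"
    then show "z' = z \<or> (cmod z = 1 \<and> z' = \<tau> z)"
      unfolding glue_equiv_def
    proof (induction rule: rtranclp_induct)
      case (step y x)
      then have "cmod y = 1 \<and> x = \<tau> y" using glue \<tau> by metis
      with step.IH show ?case using \<tau> by metis
    qed simp
  next
    assume "z' = z \<or> (cmod z = 1 \<and> z' = \<tau> z)"
    then show "glue_equiv ?w z z'"
      unfolding glue_equiv_def using glue by auto
  qed
  then show ?thesis by (simp add: \<tau>_def)
qed

lemma polygon_class_two_letters_eq_iff:
  assumes "z' \<in> cball 0 1"
  shows "polygon_class [(a, b), (a, b')] z = polygon_class [(a, b), (a, b')] z' \<longleftrightarrow>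
     z' = z \<or> (cmod z = 1 \<and> z' = (if b = b' then - z else cnj z))"
  using assms by (simp add: polygon_class_eq_iff glue_equiv_two_letters)

definition cayley :: "complex \<Rightarrow> complex" where
  "cayley v = (1 - v) / (1 + v)"

lemma cayley_cayley:
  assumes "v \<noteq> -1"
  shows "cayley (cayley v) = v"
proof -
  have v: "1 + v \<noteq> 0" using assms by (metis add.commute add_eq_0_iff)
  have "1 + (1 - v) / (1 + v) = 2 / (1 + v)" "1 - (1 - v) / (1 + v) = 2 * v / (1 + v)"
    using v by (simp_all add: field_simps)
  then show ?thesis using v by (simp add: cayley_def)
qed

lemma cayley_neq_minus_one: "cayley v \<noteq> -1"
proof (cases "1 + v = 0")
  case False
  then show ?thesis by (simp add: cayley_def divide_eq_eq algebra_simps)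
qed (simp add: cayley_def)

lemma cnj_cayley: "cnj (cayley v) = cayley (cnj v)"
  by (simp add: cayley_def)

lemma one_plus_neq_0: "0 \<le> Re v \<Longrightarrow> 1 + v \<noteq> 0"
  by (auto simp: complex_eq_iff)

lemma continuous_on_cayley:
  assumes "continuous_on S h" "\<And>x. x \<in> S \<Longrightarrow> 0 \<le> Re (h x)"
  shows "continuous_on S (\<lambda>x. cayley (h x))"
  unfolding cayley_def using assms one_plus_neq_0 by (intro continuous_intros) auto

lemma norm_one_plus_minus_power2:
  "(cmod (1 + v))\<^sup>2 = 1 + 2 * Re v + (cmod v)\<^sup>2"
  "(cmod (1 - v))\<^sup>2 = 1 - 2 * Re v + (cmod v)\<^sup>2"
  by (simp_all only: cmod_power2; simp add: power2_eq_square algebra_simps)+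

lemma norm_cayley_le_1:
  assumes "0 \<le> Re v"
  shows "cmod (cayley v) \<le> 1"
proof -
  have "1 + v \<noteq> 0" using assms by (rule one_plus_neq_0)
  moreover have "(cmod (1 - v))\<^sup>2 \<le> (cmod (1 + v))\<^sup>2"
    using assms by (simp add: norm_one_plus_minus_power2)
  then have "cmod (1 - v) \<le> cmod (1 + v)" by (simp add: power2_le_iff_abs_le)
  ultimately show ?thesis by (simp add: cayley_def norm_divide divide_le_eq_1)
qed

lemma norm_cayley_eq_1:
  assumes "Re v = 0"
  shows "cmod (cayley v) = 1"
proof -
  have "1 + v \<noteq> 0" using assms by (simp add: one_plus_neq_0)
  moreover have "(cmod (1 - v))\<^sup>2 = (cmod (1 + v))\<^sup>2"
    using assms by (simp add: norm_one_plus_minus_power2)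
  then have "cmod (1 - v) = cmod (1 + v)" by (simp add: power2_eq_iff_nonneg)
  ultimately show ?thesis by (simp add: cayley_def norm_divide)
qed

text \<open>For \<open>z = -1\<close> both sides are \<open>0\<close>, by the convention \<open>x / 0 = 0\<close>.\<close>
lemma Re_cayley: "Re (cayley z) = (1 - (cmod z)\<^sup>2) / (cmod (1 + z))\<^sup>2"
proof (cases "1 + z = 0")
  case True
  then show ?thesis by (simp add: cayley_def)
next
  case False
  then have "cnj (1 + z) \<noteq> 0" by (metis complex_cnj_zero_iff)
  then have "((1 - z) * cnj (1 + z)) / ((1 + z) * cnj (1 + z)) = (1 - z) / (1 + z)"
    by (rule mult_divide_mult_cancel_right)
  moreover have "of_real ((cmod (1 + z))\<^sup>2) = (1 + z) * cnj (1 + z)"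
    by (simp only: complex_norm_square)
  ultimately have "cayley z = ((1 - z) * cnj (1 + z)) / of_real ((cmod (1 + z))\<^sup>2)"
    by (simp add: cayley_def)
  moreover have "Re ((1 - z) * cnj (1 + z)) = 1 - (cmod z)\<^sup>2"
    by (simp only: cmod_power2; simp add: power2_eq_square algebra_simps)
  ultimately show ?thesis by (simp add: Re_divide_of_real)
qed

lemma Re_cayley_nonneg: "cmod z \<le> 1 \<Longrightarrow> 0 \<le> Re (cayley z)"
  by (simp add: Re_cayley abs_square_le_1)

lemma Re_cayley_eq_0: "cmod z = 1 \<Longrightarrow> Re (cayley z) = 0"
  by (simp add: Re_cayley)

definition quadrant_sqrt :: "complex \<Rightarrow> complex" where
  "quadrant_sqrt u = Complex (sqrt ((cmod u + Re u) / 2)) (sqrt ((cmod u - Re u) / 2))"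

lemma quadrant_sqrt_power2: "(quadrant_sqrt u)\<^sup>2 = Complex (Re u) \<bar>Im u\<bar>"
proof -
  have "\<bar>Re u\<bar> \<le> cmod u" by (rule abs_Re_le_cmod)
  then have nonneg: "0 \<le> (cmod u + Re u) / 2" "0 \<le> (cmod u - Re u) / 2" by auto
  have "(cmod u)\<^sup>2 = (Re u)\<^sup>2 + (Im u)\<^sup>2" by (simp add: cmod_power2)
  then have "2 * (sqrt ((cmod u + Re u) / 2) * sqrt ((cmod u - Re u) / 2)) = sqrt ((Im u)\<^sup>2)"
    by (simp add: real_sqrt_mult[symmetric] real_sqrt_divide power2_eq_square algebra_simps)
  then have "2 * (sqrt ((cmod u + Re u) / 2) * sqrt ((cmod u - Re u) / 2)) = \<bar>Im u\<bar>" by simp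
  then show ?thesis using nonneg
    by (simp add: complex_eq_iff power2_eq_square quadrant_sqrt_def algebra_simps) (simp add: field_simps)
qed

lemma Re_quadrant_sqrt_nonneg: "0 \<le> Re (quadrant_sqrt u)"
  using abs_Re_le_cmod[of u] by (simp add: quadrant_sqrt_def)

lemma quadrant_sqrt_real_axis:
  "Im u = 0 \<Longrightarrow> Re (quadrant_sqrt u) = 0 \<or> Im (quadrant_sqrt u) = 0"
  by (cases "0 \<le> Re u") (auto simp: quadrant_sqrt_def cmod_def)

lemma continuous_on_quadrant_sqrt: "continuous_on S quadrant_sqrt"
  unfolding quadrant_sqrt_def by (intro continuous_intros) auto

definition half_plane_sqrt :: "complex \<Rightarrow> complex" where
  "half_plane_sqrt u = (if Im u \<le> 0 then cnj (quadrant_sqrt u) else quadrant_sqrt u)"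

lemma half_plane_sqrt_power2: "(half_plane_sqrt u)\<^sup>2 = u"
proof (cases "Im u \<le> 0")
  case True
  have "(cnj (quadrant_sqrt u))\<^sup>2 = cnj ((quadrant_sqrt u)\<^sup>2)" by simp
  then show ?thesis using True by (simp add: half_plane_sqrt_def quadrant_sqrt_power2 complex_eq_iff)
next
  case False
  then show ?thesis by (simp add: half_plane_sqrt_def quadrant_sqrt_power2 complex_eq_iff)
qed

lemma Re_half_plane_sqrt_nonneg: "0 \<le> Re (half_plane_sqrt u)"
  using Re_quadrant_sqrt_nonneg by (simp add: half_plane_sqrt_def)

lemma plus_minus_one_props:
  assumes "\<sigma> \<in> {1, -1 :: complex}"
  shows "\<sigma> * \<sigma> = 1" "cnj \<sigma> = \<sigma>" "cmod \<sigma> = 1" "\<sigma> * (\<sigma> * z) = z"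
  using assms by auto

text \<open>\<open>cayley\<close> maps the closed disc onto the closed right half-plane and the unit circle onto
  the imaginary axis, where \<open>cnj v = -v\<close>; squaring therefore identifies exactly the points
  glued by the reflection.\<close>
definition fold_chart :: "complex \<Rightarrow> complex \<Rightarrow> complex" where
  "fold_chart \<sigma> z = (cayley (\<sigma> * z))\<^sup>2"

definition fold_section :: "complex \<Rightarrow> complex \<Rightarrow> complex" where
  "fold_section \<sigma> u = \<sigma> * cayley (half_plane_sqrt u)"

lemma fold_section_in:
  assumes "\<sigma> \<in> {1, -1}"
  shows "cmod (fold_section \<sigma> u) \<le> 1" "\<sigma> * fold_section \<sigma> u \<noteq> -1"
  using norm_cayley_le_1[OF Re_half_plane_sqrt_nonneg] cayley_neq_minus_one
  by (simp_all add: fold_section_def norm_mult plus_minus_one_props[OF assms])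

lemma fold_chart_section:
  assumes "\<sigma> \<in> {1, -1}"
  shows "fold_chart \<sigma> (fold_section \<sigma> u) = u"
proof -
  have "half_plane_sqrt u \<noteq> -1" using Re_half_plane_sqrt_nonneg[of u] by auto
  then show ?thesis
    using cayley_cayley half_plane_sqrt_power2
    by (simp add: fold_chart_def fold_section_def plus_minus_one_props[OF assms])
qed

lemma fold_chart_cnj:
  assumes "\<sigma> \<in> {1, -1}" "cmod z = 1"
  shows "fold_chart \<sigma> (cnj z) = fold_chart \<sigma> z"
proof -
  have "cayley (\<sigma> * cnj z) = cnj (cayley (\<sigma> * z))"
    using plus_minus_one_props[OF assms(1)] by (simp add: cnj_cayley)
  moreover have "Re (cayley (\<sigma> * z)) = 0"
    using Re_cayley_eq_0 assms plus_minus_one_props[OF assms(1)] by (simp add: norm_mult)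
  ultimately have "cayley (\<sigma> * cnj z) = - cayley (\<sigma> * z)" by (simp add: complex_eq_iff)
  then show ?thesis by (simp add: fold_chart_def)
qed

text \<open>If \<open>fold_chart \<sigma> z = v\<^sup>2\<close>, both square roots \<open>v\<close> and \<open>-v\<close> lie in the closed right
  half-plane only when \<open>v\<close> is imaginary, i.e.\ when \<open>z\<close> is on the unit circle.\<close>
lemma fold_section_chart:
  assumes \<sigma>: "\<sigma> \<in> {1, -1}" and z: "cmod z \<le> 1" "\<sigma> * z \<noteq> -1"
  shows "fold_section \<sigma> (fold_chart \<sigma> z) = z \<or>
         (cmod z = 1 \<and> fold_section \<sigma> (fold_chart \<sigma> z) = cnj z)"
proof -
  note \<sigma>\<sigma> = plus_minus_one_props[OF \<sigma>]
  define v where "v = cayley (\<sigma> * z)"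
  have Re_v: "0 \<le> Re v" using Re_cayley_nonneg z \<sigma>\<sigma> by (simp add: v_def norm_mult)
  have cv: "cayley v = \<sigma> * z" using cayley_cayley z by (simp add: v_def)
  have section_eq: "fold_section \<sigma> (fold_chart \<sigma> z) = \<sigma> * cayley (half_plane_sqrt (v\<^sup>2))"
    by (simp add: fold_section_def fold_chart_def v_def)
  have "(half_plane_sqrt (v\<^sup>2))\<^sup>2 = v\<^sup>2" by (rule half_plane_sqrt_power2)
  then have "half_plane_sqrt (v\<^sup>2) = v \<or> half_plane_sqrt (v\<^sup>2) = - v" by (simp add: power2_eq_iff)
  then show ?thesis
  proof
    assume "half_plane_sqrt (v\<^sup>2) = v"
    then show ?thesis using section_eq cv by (simp add: \<sigma>\<sigma>)
  next
    assume r: "half_plane_sqrt (v\<^sup>2) = - v"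
    then have "Re v = 0" using Re_half_plane_sqrt_nonneg[of "v\<^sup>2"] Re_v by simp
    then have "cnj v = - v" by (simp add: complex_eq_iff)
    have "cmod z = 1"
      using norm_cayley_eq_1[OF \<open>Re v = 0\<close>] cv \<sigma>\<sigma> by (simp add: norm_mult)
    moreover have "fold_section \<sigma> (fold_chart \<sigma> z) = \<sigma> * cnj (cayley v)"
      using section_eq r \<open>cnj v = - v\<close> by (simp add: cnj_cayley)
    then have "fold_section \<sigma> (fold_chart \<sigma> z) = cnj z" using cv by (simp add: \<sigma>\<sigma>)
    ultimately show ?thesis by simp
  qed
qed

lemma continuous_on_fold_chart: "continuous_on {z. \<sigma> * z \<noteq> -1} (fold_chart \<sigma>)"
  unfolding fold_chart_def cayley_def by (intro continuous_intros) (auto simp: add_eq_0_iff)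

lemma continuous_map_fold_section:
  fixes a :: "nat \<times> nat" and b b' :: bool
  assumes b: "b \<noteq> b'" and \<sigma>: "\<sigma> \<in> {1, -1}"
  defines "q \<equiv> polygon_class [(a, b), (a, b')]"
  shows "continuous_map euclidean (quotient_topology (top_of_set (cball 0 1)) q) (q \<circ> fold_section \<sigma>)"
proof -
  note \<sigma>\<sigma> = plus_minus_one_props[OF \<sigma>]
  define f where "f u = \<sigma> * cayley (cnj (quadrant_sqrt u))" for u
  define g where "g u = \<sigma> * cayley (quadrant_sqrt u)" for u
  have "q \<circ> fold_section \<sigma> = (\<lambda>u. q (if Im u \<le> 0 then f u else g u))"
    by (rule ext) (simp add: fold_section_def half_plane_sqrt_def f_def g_def)
  moreover have "range f \<subseteq> cball 0 1" "range g \<subseteq> cball 0 1"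
    using norm_cayley_le_1 Re_quadrant_sqrt_nonneg \<sigma>\<sigma> by (auto simp: f_def g_def norm_mult)
  moreover have "continuous_on UNIV f" "continuous_on UNIV g"
    unfolding f_def g_def using Re_quadrant_sqrt_nonneg
    by (intro continuous_intros continuous_on_cayley continuous_on_quadrant_sqrt; simp)+
  moreover have "q (f u) = q (g u)" if "Im u = 0" for u
    using quadrant_sqrt_real_axis[OF that]
  proof
    assume "Re (quadrant_sqrt u) = 0"
    then have "cmod (g u) = 1" using norm_cayley_eq_1 \<sigma>\<sigma> by (simp add: g_def norm_mult)
    moreover have "f u = cnj (g u)" by (simp add: f_def g_def cnj_cayley \<sigma>\<sigma>)
    moreover have "f u \<in> cball 0 1" using \<open>range f \<subseteq> cball 0 1\<close> by blast
    ultimately show ?thesis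
      using polygon_class_two_letters_eq_iff[of "f u" a b b' "g u"] b by (simp add: q_def)
  next
    assume "Im (quadrant_sqrt u) = 0"
    then have "cnj (quadrant_sqrt u) = quadrant_sqrt u" by (simp add: complex_eq_iff)
    then show ?thesis by (simp add: f_def g_def)
  qed
  ultimately show ?thesis by (simp add: continuous_map_quotient_cases_Im)
qed

lemma polygon_fold_chart:
  assumes b: "b \<noteq> b'" and \<sigma>: "\<sigma> \<in> {1, -1}"
  shows "polygon_class [(a, b), (a, b')] ` (cball 0 1 \<inter> {z. \<sigma> * z \<noteq> -1})
           \<subseteq> surf_interior (polygon_surface [(a, b), (a, b')])"
proof -
  let ?q = "polygon_class [(a, b), (a, b')]"
  let ?U = "cball 0 1 \<inter> {z. \<sigma> * z \<noteq> -1}"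
  note \<sigma>\<sigma> = plus_minus_one_props[OF \<sigma>]
  have q_eq: "?q z = ?q z' \<longleftrightarrow> z' = z \<or> (cmod z = 1 \<and> z' = cnj z)" if "z' \<in> cball 0 1" for z z'
    using polygon_class_two_letters_eq_iff[OF that] b by simp
  have "quotient_plane_chart (cball 0 1) ?U ?q (fold_section \<sigma>) (fold_chart \<sigma>)"
  proof
    show "openin (top_of_set (cball 0 1)) ?U"
      by (intro openin_open_Int open_Collect_neq continuous_intros)
    show "continuous_map euclidean (quotient_topology (top_of_set (cball 0 1)) ?q) (?q \<circ> fold_section \<sigma>)"
      using b \<sigma> by (rule continuous_map_fold_section)
    show "range (fold_section \<sigma>) \<subseteq> ?U"
      using fold_section_in[OF \<sigma>] by auto
    show "continuous_on ?U (fold_chart \<sigma>)"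
      by (rule continuous_on_subset[OF continuous_on_fold_chart]) auto
    show "fold_chart \<sigma> (fold_section \<sigma> u) = u" for u
      using \<sigma> by (rule fold_chart_section)
    show "?q (fold_section \<sigma> (fold_chart \<sigma> z)) = ?q z" if "z \<in> ?U" for z
    proof -
      have "cmod z \<le> 1" "\<sigma> * z \<noteq> -1" using that by auto
      from fold_section_chart[OF \<sigma> this]
      have "?q z = ?q (fold_section \<sigma> (fold_chart \<sigma> z))"
        using q_eq fold_section_in[OF \<sigma>] by simp
      then show ?thesis by simp
    qed
    show "z \<in> ?U \<and> fold_chart \<sigma> z = fold_chart \<sigma> z'"
      if "z \<in> cball 0 1" "z' \<in> ?U" "?q z = ?q z'" for z z'
    proof -
      have "z' = z \<or> (cmod z = 1 \<and> z' = cnj z)" using q_eq that by auto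
      then show ?thesis
      proof
        assume z': "cmod z = 1 \<and> z' = cnj z"
        then have "\<sigma> * z = cnj (\<sigma> * z')" by (simp add: \<sigma>\<sigma>)
        then have "\<sigma> * z \<noteq> -1" using that(2) by (auto simp: complex_eq_iff)
        then show ?thesis using z' that(1) fold_chart_cnj[OF \<sigma>] by simp
      qed (use that in simp)
    qed
  qed
  then show ?thesis
    unfolding polygon_surface_quotient by (rule quotient_plane_chart.image_subset_surf_interior)
qed

text \<open>The disc is the vertical projection of the upper unit hemisphere; \<open>gnomonic\<close> projects the
  hemisphere point above \<open>\<zeta>\<close> from the centre onto the plane \<open>x = 1\<close>, so it identifies
  antipodal points of the boundary circle. \<open>gnomonic_point\<close> inverts it up to the sign of
  the height.\<close>
definition gnomonic :: "complex \<Rightarrow> complex" where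
  "gnomonic \<zeta> = of_real (Im \<zeta> / Re \<zeta>) + \<i> * of_real (sqrt (1 - (cmod \<zeta>)\<^sup>2) / Re \<zeta>)"

definition gnomonic_point :: "complex \<Rightarrow> complex" where
  "gnomonic_point u = (1 + \<i> * of_real (Re u)) / of_real (sqrt (1 + (cmod u)\<^sup>2))"

lemma Re_gnomonic [simp]: "Re (gnomonic \<zeta>) = Im \<zeta> / Re \<zeta>"
  and Im_gnomonic [simp]: "Im (gnomonic \<zeta>) = sqrt (1 - (cmod \<zeta>)\<^sup>2) / Re \<zeta>"
  by (simp_all add: gnomonic_def)

lemma sqrt_one_plus_norm_pos: "0 < sqrt (1 + (cmod u)\<^sup>2)"
  by (simp add: add_pos_nonneg)

lemma Re_gnomonic_point [simp]: "Re (gnomonic_point u) = 1 / sqrt (1 + (cmod u)\<^sup>2)"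
  and Im_gnomonic_point [simp]: "Im (gnomonic_point u) = Re u / sqrt (1 + (cmod u)\<^sup>2)"
  by (simp_all add: gnomonic_point_def Re_divide_of_real Im_divide_of_real)

lemma one_minus_norm_gnomonic_point:
  "1 - (cmod (gnomonic_point u))\<^sup>2 = (Im u)\<^sup>2 / (1 + (cmod u)\<^sup>2)"
proof -
  have pos: "0 < 1 + (cmod u)\<^sup>2" by (simp add: add_pos_nonneg)
  have "(cmod (gnomonic_point u))\<^sup>2 = (1 + (Re u)\<^sup>2) / (1 + (cmod u)\<^sup>2)"
    using pos by (simp add: cmod_power2 power_divide add_divide_distrib)
  then show ?thesis
    using pos by (simp add: cmod_power2[of u] field_simps)
qed

lemma norm_gnomonic_point_le_1: "cmod (gnomonic_point u) \<le> 1"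
proof -
  have "0 \<le> 1 - (cmod (gnomonic_point u))\<^sup>2"
    unfolding one_minus_norm_gnomonic_point by (simp add: add_nonneg_nonneg)
  then show ?thesis by (simp add: abs_square_le_1)
qed

lemma norm_gnomonic_point_real: "Im u = 0 \<Longrightarrow> cmod (gnomonic_point u) = 1"
  using one_minus_norm_gnomonic_point[of u] norm_ge_zero[of "gnomonic_point u"]
  by (simp add: power2_eq_1_iff)

definition gnomonic_section :: "complex \<Rightarrow> complex" where
  "gnomonic_section u = (if Im u \<le> 0 then - gnomonic_point u else gnomonic_point u)"

lemma gnomonic_gnomonic_section: "gnomonic (gnomonic_section u) = u"
proof -
  define N where "N = sqrt (1 + (cmod u)\<^sup>2)"
  have N: "0 < N" unfolding N_def by (rule sqrt_one_plus_norm_pos)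
  have "sqrt (1 - (cmod (gnomonic_point u))\<^sup>2) = \<bar>Im u\<bar> / N"
    unfolding one_minus_norm_gnomonic_point N_def by (simp add: real_sqrt_divide)
  then show ?thesis
    using N by (auto simp: gnomonic_section_def complex_eq_iff N_def[symmetric] field_simps)
qed

lemma gnomonic_uminus: "cmod \<zeta> = 1 \<Longrightarrow> gnomonic (- \<zeta>) = gnomonic \<zeta>"
  by (simp add: gnomonic_def)

lemma gnomonic_point_gnomonic:
  assumes "cmod \<zeta> \<le> 1" "Re \<zeta> \<noteq> 0"
  shows "gnomonic_point (gnomonic \<zeta>) = of_real (sgn (Re \<zeta>)) * \<zeta>"
proof -
  define x where "x = Re \<zeta>"
  have x: "x \<noteq> 0" using assms(2) by (simp add: x_def)
  have h: "(sqrt (1 - (cmod \<zeta>)\<^sup>2))\<^sup>2 = 1 - (cmod \<zeta>)\<^sup>2"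
    using assms(1) by (simp add: abs_square_le_1)
  have "1 + (cmod (gnomonic \<zeta>))\<^sup>2 = 1 / x\<^sup>2"
    using x h by (simp add: cmod_power2 power_divide x_def[symmetric] cmod_power2[of \<zeta>] field_simps)
  then have "sqrt (1 + (cmod (gnomonic \<zeta>))\<^sup>2) = 1 / \<bar>x\<bar>"
    by (simp add: real_sqrt_divide)
  then show ?thesis
    using x by (cases "0 < x") (auto simp: gnomonic_point_def complex_eq_iff x_def field_simps)
qed

lemma gnomonic_section_gnomonic:
  assumes "cmod \<zeta> \<le> 1" "Re \<zeta> \<noteq> 0"
  shows "gnomonic_section (gnomonic \<zeta>) = \<zeta> \<or> (cmod \<zeta> = 1 \<and> gnomonic_section (gnomonic \<zeta>) = - \<zeta>)"
proof -
  have p: "gnomonic_point (gnomonic \<zeta>) = of_real (sgn (Re \<zeta>)) * \<zeta>"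
    using assms by (rule gnomonic_point_gnomonic)
  show ?thesis
  proof (cases "cmod \<zeta> = 1")
    case False
    then have "cmod \<zeta> < 1" using assms(1) by simp
    then have "0 < sqrt (1 - (cmod \<zeta>)\<^sup>2)" by (simp add: abs_square_less_1)
    then have "Im (gnomonic \<zeta>) \<le> 0 \<longleftrightarrow> Re \<zeta> < 0"
      using assms(2) by (auto simp: divide_le_0_iff)
    then show ?thesis using p assms(2) by (auto simp: gnomonic_section_def sgn_if)
  next
    case True
    then show ?thesis using p assms(2) by (auto simp: gnomonic_section_def sgn_if)
  qed
qed

lemma continuous_on_gnomonic: "continuous_on {\<zeta>. Re \<zeta> \<noteq> 0} gnomonic"
  unfolding gnomonic_def by (intro continuous_intros) auto

lemma continuous_on_gnomonic_point: "continuous_on S gnomonic_point"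
  unfolding gnomonic_point_def using sqrt_one_plus_norm_pos
  by (intro continuous_intros) (metis less_irrefl of_real_eq_0_iff)

lemma unit_rotation:
  assumes "cmod z0 = 1"
  shows "cnj z0 * z0 = 1" "cnj z0 * (z0 * x) = x" "z0 * (cnj z0 * x) = x" "cmod (cnj z0 * x) = cmod x"
proof -
  have z0_cnj: "z0 * cnj z0 = 1" using complex_norm_square[of z0, symmetric] assms by simp
  then show cnj_z0: "cnj z0 * z0 = 1" by (metis mult.commute)
  show "cnj z0 * (z0 * x) = x" "z0 * (cnj z0 * x) = x"
    using z0_cnj cnj_z0 by (simp_all add: mult.assoc[symmetric])
  show "cmod (cnj z0 * x) = cmod x" using assms by (simp add: norm_mult)
qed

definition antipodal_chart :: "complex \<Rightarrow> complex \<Rightarrow> complex" where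
  "antipodal_chart z0 z = gnomonic (cnj z0 * z)"

definition antipodal_section :: "complex \<Rightarrow> complex \<Rightarrow> complex" where
  "antipodal_section z0 u = z0 * gnomonic_section u"

lemma antipodal_chart_section:
  "cmod z0 = 1 \<Longrightarrow> antipodal_chart z0 (antipodal_section z0 u) = u"
  by (simp add: antipodal_chart_def antipodal_section_def unit_rotation gnomonic_gnomonic_section)

lemma antipodal_section_in:
  assumes "cmod z0 = 1"
  shows "cmod (antipodal_section z0 u) \<le> 1" "Re (cnj z0 * antipodal_section z0 u) \<noteq> 0"
  using norm_gnomonic_point_le_1[of u] sqrt_one_plus_norm_pos[of u] assms
  by (simp_all add: antipodal_section_def gnomonic_section_def unit_rotation norm_mult)

lemma antipodal_section_chart:
  assumes "cmod z0 = 1" "cmod z \<le> 1" "Re (cnj z0 * z) \<noteq> 0"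
  shows "antipodal_section z0 (antipodal_chart z0 z) = z \<or>
         (cmod z = 1 \<and> antipodal_section z0 (antipodal_chart z0 z) = - z)"
proof -
  have "cmod (cnj z0 * z) \<le> 1" using assms(1,2) by (simp add: unit_rotation)
  from gnomonic_section_gnomonic[OF this assms(3)] show ?thesis
    using assms(1) by (auto simp: antipodal_section_def antipodal_chart_def unit_rotation)
qed

lemma antipodal_chart_uminus:
  "cmod z0 = 1 \<Longrightarrow> cmod z = 1 \<Longrightarrow> antipodal_chart z0 (- z) = antipodal_chart z0 z"
  using gnomonic_uminus[of "cnj z0 * z"] by (simp add: antipodal_chart_def unit_rotation)

lemma continuous_on_antipodal_chart:
  "continuous_on {z. Re (cnj z0 * z) \<noteq> 0} (antipodal_chart z0)"
  unfolding antipodal_chart_def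
  by (rule continuous_on_compose2[OF continuous_on_gnomonic]) (auto intro: continuous_intros)

lemma continuous_map_antipodal_section:
  fixes a :: "nat \<times> nat" and b :: bool
  assumes z0: "cmod z0 = 1"
  defines "q \<equiv> polygon_class [(a, b), (a, b)]"
  shows "continuous_map euclidean (quotient_topology (top_of_set (cball 0 1)) q) (q \<circ> antipodal_section z0)"
proof -
  define f where "f u = - (z0 * gnomonic_point u)" for u
  define g where "g u = z0 * gnomonic_point u" for u
  have "q \<circ> antipodal_section z0 = (\<lambda>u. q (if Im u \<le> 0 then f u else g u))"
    by (rule ext) (simp add: antipodal_section_def gnomonic_section_def f_def g_def)
  moreover have "range f \<subseteq> cball 0 1" "range g \<subseteq> cball 0 1"
    using norm_gnomonic_point_le_1 z0 by (auto simp: f_def g_def norm_mult)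
  moreover have "continuous_on UNIV f" "continuous_on UNIV g"
    unfolding f_def g_def by (intro continuous_intros continuous_on_gnomonic_point)+
  moreover have "q (f u) = q (g u)" if "Im u = 0" for u
  proof -
    have "cmod (g u) = 1" using norm_gnomonic_point_real[OF that] z0 by (simp add: g_def norm_mult)
    moreover have "f u \<in> cball 0 1" using \<open>range f \<subseteq> cball 0 1\<close> by blast
    ultimately show ?thesis
      using polygon_class_two_letters_eq_iff[of "f u" a b b "g u"] by (simp add: q_def f_def g_def)
  qed
  ultimately show ?thesis by (simp add: continuous_map_quotient_cases_Im)
qed

lemma polygon_antipodal_chart:
  assumes z0: "cmod z0 = 1"
  shows "polygon_class [(a, b), (a, b)] ` (cball 0 1 \<inter> {z. Re (cnj z0 * z) \<noteq> 0})
           \<subseteq> surf_interior (polygon_surface [(a, b), (a, b)])"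
proof -
  let ?q = "polygon_class [(a, b), (a, b)]"
  let ?U = "cball 0 1 \<inter> {z. Re (cnj z0 * z) \<noteq> 0}"
  have q_eq: "?q z = ?q z' \<longleftrightarrow> z' = z \<or> (cmod z = 1 \<and> z' = - z)" if "z' \<in> cball 0 1" for z z'
    using polygon_class_two_letters_eq_iff[OF that] by simp
  have "quotient_plane_chart (cball 0 1) ?U ?q (antipodal_section z0) (antipodal_chart z0)"
  proof
    show "openin (top_of_set (cball 0 1)) ?U"
      by (intro openin_open_Int open_Collect_neq continuous_intros)
    show "continuous_map euclidean (quotient_topology (top_of_set (cball 0 1)) ?q)
        (?q \<circ> antipodal_section z0)"
      using z0 by (rule continuous_map_antipodal_section)
    show "range (antipodal_section z0) \<subseteq> ?U"
      using antipodal_section_in[OF z0] by auto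
    show "continuous_on ?U (antipodal_chart z0)"
      by (rule continuous_on_subset[OF continuous_on_antipodal_chart]) auto
    show "antipodal_chart z0 (antipodal_section z0 u) = u" for u
      using z0 by (rule antipodal_chart_section)
    show "?q (antipodal_section z0 (antipodal_chart z0 z)) = ?q z" if "z \<in> ?U" for z
    proof -
      have "cmod z \<le> 1" "Re (cnj z0 * z) \<noteq> 0" using that by auto
      from antipodal_section_chart[OF z0 this]
      have "?q z = ?q (antipodal_section z0 (antipodal_chart z0 z))"
        using q_eq antipodal_section_in[OF z0] by simp
      then show ?thesis by simp
    qed
    show "z \<in> ?U \<and> antipodal_chart z0 z = antipodal_chart z0 z'"
      if "z \<in> cball 0 1" "z' \<in> ?U" "?q z = ?q z'" for z z'
    proof -
      have "z' = z \<or> (cmod z = 1 \<and> z' = - z)" using q_eq that by auto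
      then show ?thesis
      proof
        assume z': "cmod z = 1 \<and> z' = - z"
        then show ?thesis using that(1,2) antipodal_chart_uminus[OF z0, of z] by auto
      qed (use that in simp)
    qed
  qed
  then show ?thesis
    unfolding polygon_surface_quotient by (rule quotient_plane_chart.image_subset_surf_interior)
qed

lemma surf_boundary_polygon_two_letters:
  "surf_boundary (polygon_surface [(a, b), (a, b')]) = {}"
proof -
  let ?w = "[(a, b), (a, b')]"
  have "p \<in> surf_interior (polygon_surface ?w)" if p: "p \<in> topspace (polygon_surface ?w)" for p
  proof -
    obtain z where z: "z \<in> cball 0 1" and p: "p = polygon_class ?w z"
      using p by (auto simp: polygon_surface_quotient topspace_quotient_topology)
    show ?thesis
    proof (cases "cmod z < 1")
      case True
      then have "z \<in> ball 0 1" by simp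
      then show ?thesis using polygon_class_ball_surf_interior[of ?w] p by blast
    next
      case False
      then have z1: "cmod z = 1" using z by simp
      show ?thesis
      proof (cases "b = b'")
        case True
        have "Re (cnj z * z) = 1" using unit_rotation(1)[OF z1] by simp
        then show ?thesis using polygon_antipodal_chart[OF z1, of a b] True z p by auto
      next
        case False
        define \<sigma> :: complex where "\<sigma> = (if z = -1 then -1 else 1)"
        have "\<sigma> \<in> {1, -1}" "\<sigma> * z \<noteq> -1" by (auto simp: \<sigma>_def)
        then show ?thesis using polygon_fold_chart[OF False] z p by blast
      qed
    qed
  qed
  then show ?thesis
    using surf_interior_subset_topspace by (auto simp: surf_boundary_def)
qed

lemma surface_model_sphere: "surface_model (Sphere_H 0) 0 = polygon_surface [((0, 0), True), ((0, 0), False)]"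
  by (simp add: surface_model_def model_word_def handles_word_def holes_word_def)

lemma surface_model_projective_plane:
  "surface_model (Proj_H 0) 0 = polygon_surface [((1, 0), True), ((1, 0), True)]"
  by (simp add: surface_model_def model_word_def handles_word_def holes_word_def)

lemma mu_conn_nonpos_cases:
  assumes mu: "mu_conn k s m n \<le> 0"
    and closed: "s = 0 \<Longrightarrow> k = Sphere_H 0 \<or> k = Proj_H 0 \<Longrightarrow> n = 0"
  shows "(k, s, m, n) \<in> {(Sphere_H 0, 0, 0, 0), (Proj_H 0, 0, 0, 0), (Sphere_H 0, 1, 0, 0),
    (Sphere_H 0, 0, 1, 0), (Sphere_H 0, 1, 0, 1), (Sphere_H 0, 0, 2, 0), (Proj_H 0, 0, 1, 0),
    (Sphere_H 1, 0, 0, 0), (Klein_H 0, 0, 0, 0), (Sphere_H 0, 1, 1, 0), (Sphere_H 0, 1, 0, 2),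
    (Proj_H 0, 1, 0, 0), (Sphere_H 0, 2, 0, 0)}"
proof -
  have le4: "x \<le> 4 \<Longrightarrow> x = 0 \<or> x = 1 \<or> x = 2 \<or> x = 3 \<or> x = 4" for x :: nat
    by auto
  show ?thesis
  proof (cases k)
    case (Sphere_H a)
    then have "real (4 * a + 2 * m + 2 * s + n) \<le> 4" using mu by (simp add: mu_conn_def)
    then have ineq: "4 * a + 2 * m + 2 * s + n \<le> 4" by linarith
    show ?thesis
    proof (cases "a = 0")
      case False
      then have "a = 1" "m = 0" "s = 0" "n = 0" using ineq by auto
      then show ?thesis using Sphere_H by simp
    next
      case True
      have "s \<le> 4" "m \<le> 4" "n \<le> 4" using ineq by auto
      then show ?thesis using Sphere_H True ineq closed
        by (elim le4[elim_format] disjE) simp_all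
    qed
  next
    case (Proj_H a)
    then have "real (4 * a + 2 * m + 2 * s + n) \<le> 2" using mu by (simp add: mu_conn_def)
    then have ineq: "4 * a + 2 * m + 2 * s + n \<le> 2" by linarith
    then have "a = 0" "s \<le> 4" "m \<le> 4" "n \<le> 4" by auto
    then show ?thesis using Proj_H ineq closed
      by (elim le4[elim_format] disjE) simp_all
  next
    case (Klein_H a)
    then have "real (4 * a + 2 * m + 2 * s + n) \<le> 0" using mu by (simp add: mu_conn_def)
    then show ?thesis using Klein_H by simp
  qed
qed

theorem lemma3p1:
  fixes X :: "'a topology" and A B :: "'a set" and k :: surf_kind and s :: nat
  assumes "stratified_surface X A B"
    and "connected_space X"
    and "X homeomorphic_space surface_model k s"
    and "mu_conn k s (card A) (card B) \<le> 0"
  shows "iso_to_model X A B (Sphere_H 0) 0 0 0 \<or>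
         iso_to_model X A B (Proj_H 0) 0 0 0 \<or>
         iso_to_model X A B (Sphere_H 0) 1 0 0 \<or>
         iso_to_model X A B (Sphere_H 0) 0 1 0 \<or>
         iso_to_model X A B (Sphere_H 0) 1 0 1 \<or>
         iso_to_model X A B (Sphere_H 0) 0 2 0 \<or>
         iso_to_model X A B (Proj_H 0) 0 1 0 \<or>
         iso_to_model X A B (Sphere_H 1) 0 0 0 \<or>
         iso_to_model X A B (Klein_H 0) 0 0 0 \<or>
         iso_to_model X A B (Sphere_H 0) 1 1 0 \<or>
         iso_to_model X A B (Sphere_H 0) 1 0 2 \<or>
         iso_to_model X A B (Proj_H 0) 1 0 0 \<or>
         iso_to_model X A B (Sphere_H 0) 2 0 0"
proof -
  have iso: "iso_to_model X A B k s (card A) (card B)"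
    using assms(1,3) by (rule iso_to_model_homeomorphic)
  have no_boundary_points: "card B = 0" if "s = 0" "k = Sphere_H 0 \<or> k = Proj_H 0"
  proof -
    obtain f where f: "homeomorphic_map X (surface_model k s) f"
      using assms(3) homeomorphic_space by blast
    have "surf_boundary (surface_model k s) = {}"
      using that surf_boundary_polygon_two_letters
      by (auto simp: surface_model_sphere surface_model_projective_plane)
    then have "surf_boundary X = {}"
      using homeomorphic_map_surf_boundary[OF f] by simp
    then show ?thesis using assms(1) by (simp add: stratified_surface_def)
  qed
  have "(k, s, card A, card B) \<in> {(Sphere_H 0, 0, 0, 0), (Proj_H 0, 0, 0, 0), (Sphere_H 0, 1, 0, 0),
    (Sphere_H 0, 0, 1, 0), (Sphere_H 0, 1, 0, 1), (Sphere_H 0, 0, 2, 0), (Proj_H 0, 0, 1, 0),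
    (Sphere_H 1, 0, 0, 0), (Klein_H 0, 0, 0, 0), (Sphere_H 0, 1, 1, 0), (Sphere_H 0, 1, 0, 2),
    (Proj_H 0, 1, 0, 0), (Sphere_H 0, 2, 0, 0)}"
    using assms(4) no_boundary_points by (rule mu_conn_nonpos_cases)
  then show ?thesis using iso by auto
qed

end
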